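(* Let $\hat\varrho$ be a normalized proximate order of order $\rho>0$. There exists a constant $k$ depending only on $\rho$ such that for every $\sigma>0$ there is a constant $C(\sigma)$ with $$\frac{1}{\ell!}\|\partial_{x_0}^\ell f\|_{\hat\varrho,k\sigma}\le C(\sigma)\|f\|_{\hat\varrho,\sigma}\frac{(2k\sigma)^{\ell/\rho}}{G_{\hat\varrho,\ell}}$$ for all $f\in A_{\hat\varrho,\sigma}$ and all $\ell\in\mathbb{N}_0$.
   Context: $\mathbb{R}_n$ is the real Clifford algebra generated by $e_1,\dots,e_n$ with $e_ie_j=-e_je_i$ ($i\ne j$), $e_i^2=-1$, with Euclidean norm $|a|^2=\sum_Aa_A^2$. Paravectors $x=x_0+\sum x_\ell e_\ell$ are identified with $\mathbb{R}^{n+1}$; $\mathbb{S}=\{\sum x_\ell e_\ell:\sum x_\ell^2=1\}$. $\mathcal{SM}_L(\mathbb{R}^{n+1})$ is the set of entire left slice monogenic functions: $f(u+jv)=f_0(u,v)+jf_1(u,v)$ for all $u,v\in\mathbb{R}$, $j\in\mathbb{S}$, with $f_0,f_1$ continuously differentiable, $f_0$ even and $f_1$ odd in $v$, $\partial_uf_0=\partial_vf_1$, $\partial_vf_0=-\partial_uf_1$. $\partial_{x_0}$ is the partial derivative in $x_0$. A proximate order is a differentiable $\varrho:[0,\infty)\to[0,\infty)$ with $\lim_{r\to\infty}\varrho(r)=\rho>0$ and $\lim_{r\to\infty}\varrho'(r)r\ln r=0$; normalized means $r\mapsto r^{\varrho(r)}$ is strictly increasing on $(0,\infty)$ and tends to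 $0$ as $r\to0^+$; $\varphi$ is the inverse of $r\mapsto r^{\varrho(r)}$, $G_{\varrho,0}=1$, $G_{\varrho,\ell}=\varphi(\ell)^\ell/(e\rho)^{\ell/\rho}$. $A_{\varrho,\sigma}=\{f\in\mathcal{SM}_L(\mathbb{R}^{n+1}):\|f\|_{\varrho,\sigma}:=\sup_x|f(x)|e^{-\sigma|x|^{\varrho(|x|)}}<\infty\}$. *)

theory Defs
  imports "HOL-Analysis.Analysis"
begin

text \<open>The real Clifford algebra R_n with generators e_i indexed by a finite linearly
ordered type 'n (n = CARD('n)). An element is a real vector indexed by the subsets
A of 'n (coefficient a_A of the basis blade e_A); the norm of real^('n set) is the
Euclidean norm |a|^2 = sum of a_A^2.\<close>

type_synonym 'n clif = "real ^ ('n set)"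

text \<open>Sign of e_A e_B = sign * e_(A sym-diff B), using e_i e_j = - e_j e_i and e_i^2 = -1.\<close>
definition cl_sign :: "('n::{finite,linorder}) set \<Rightarrow> 'n set \<Rightarrow> real" where
  "cl_sign A B = (-1) ^ card {(a, b). a \<in> A \<and> b \<in> B \<and> b < a} * (-1) ^ card (A \<inter> B)"

definition cl_mult :: "('n::{finite,linorder}) clif \<Rightarrow> 'n clif \<Rightarrow> 'n clif" (infixl "\<odot>" 70) where
  "x \<odot> y = (\<chi> C. \<Sum>A\<in>UNIV. \<Sum>B\<in>UNIV.
      if (A - B) \<union> (B - A) = C then cl_sign A B * (x $ A) * (y $ B) else 0)"

definition cl_one :: "('n::{finite,linorder}) clif" where
  "cl_one = axis {} 1"

text \<open>Paravectors x_0 + sum x_l e_l (identified with R^(n+1)).\<close>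
definition paravectors :: "('n::{finite,linorder}) clif set" where
  "paravectors = {x. \<forall>A. card A \<ge> 2 \<longrightarrow> x $ A = 0}"

definition cl_sphere :: "('n::{finite,linorder}) clif set" where
  "cl_sphere = {x. x \<in> paravectors \<and> x $ {} = 0 \<and> norm x = 1}"

definition slice_monogenic :: "(('n::{finite,linorder}) clif \<Rightarrow> 'n clif) \<Rightarrow> bool" where
  "slice_monogenic f \<longleftrightarrow>
    (\<exists>(f0 :: real \<times> real \<Rightarrow> 'n clif) (f1 :: real \<times> real \<Rightarrow> 'n clif)
       (D0 :: real \<times> real \<Rightarrow> (real \<times> real) \<Rightarrow>\<^sub>L 'n clif) (D1 :: real \<times> real \<Rightarrow> (real \<times> real) \<Rightarrow>\<^sub>L 'n clif).
      (\<forall>z. (f0 has_derivative blinfun_apply (D0 z)) (at z)) \<and> continuous_on UNIV D0 \<and>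
      (\<forall>z. (f1 has_derivative blinfun_apply (D1 z)) (at z)) \<and> continuous_on UNIV D1 \<and>
      (\<forall>u v. f0 (u, - v) = f0 (u, v)) \<and>
      (\<forall>u v. f1 (u, - v) = - f1 (u, v)) \<and>
      (\<forall>z. D0 z (1, 0) = D1 z (0, 1)) \<and>
      (\<forall>z. D0 z (0, 1) = - D1 z (1, 0)) \<and>
      (\<forall>u v. \<forall>j \<in> cl_sphere. f (u *\<^sub>R cl_one + v *\<^sub>R j) = f0 (u, v) + j \<odot> f1 (u, v)))"

definition pd0 :: "(('n::{finite,linorder}) clif \<Rightarrow> 'n clif) \<Rightarrow> 'n clif \<Rightarrow> 'n clif" where
  "pd0 f x = vector_derivative (\<lambda>t. f (x + t *\<^sub>R cl_one)) (at 0)"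

definition proximate_order :: "(real \<Rightarrow> real) \<Rightarrow> real \<Rightarrow> bool" where
  "proximate_order \<rho>' \<rho> \<longleftrightarrow> \<rho> > 0 \<and>
     (\<forall>r \<ge> 0. \<rho>' r \<ge> 0) \<and>
     (\<forall>r \<ge> 0. \<rho>' differentiable (at r within {0..})) \<and>
     (\<rho>' \<longlongrightarrow> \<rho>) at_top \<and>
     ((\<lambda>r. deriv \<rho>' r * r * ln r) \<longlongrightarrow> 0) at_top"

definition normalized_proximate_order :: "(real \<Rightarrow> real) \<Rightarrow> real \<Rightarrow> bool" where
  "normalized_proximate_order \<rho>' \<rho> \<longleftrightarrow> proximate_order \<rho>' \<rho> \<and>
     strict_mono_on {0<..} (\<lambda>r. r powr \<rho>' r) \<and>
     ((\<lambda>r. r powr \<rho>' r) \<longlongrightarrow> 0) (at_right 0)"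

definition po_inv :: "(real \<Rightarrow> real) \<Rightarrow> real \<Rightarrow> real" where
  "po_inv \<rho>' s = (THE r. r > 0 \<and> r powr \<rho>' r = s)"

definition G_po :: "(real \<Rightarrow> real) \<Rightarrow> real \<Rightarrow> nat \<Rightarrow> real" where
  "G_po \<rho>' \<rho> l = (if l = 0 then 1
      else po_inv \<rho>' (real l) ^ l / (exp 1 * \<rho>) powr (real l / \<rho>))"

definition po_norm :: "(real \<Rightarrow> real) \<Rightarrow> real \<Rightarrow> (('n::{finite,linorder}) clif \<Rightarrow> 'n clif) \<Rightarrow> ereal" where
  "po_norm \<rho>' \<sigma> f = (SUP x \<in> paravectors. ereal (norm (f x) * exp (- \<sigma> * norm x powr \<rho>' (norm x))))"

definition A_space :: "(real \<Rightarrow> real) \<Rightarrow> real \<Rightarrow> (('n::{finite,linorder}) clif \<Rightarrow> 'n clif) set" where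
  "A_space \<rho>' \<sigma> = {f. slice_monogenic f \<and> po_norm \<rho>' \<sigma> f < \<infinity>}"

end

(*
  Write p for the proximate order and V r = r powr p r. A slice monogenic f has a holomorphic
  stem: every blade component of f0 + i f1 is an entire function H_A of u + i v, pd0 acts on f as
  complex differentiation of the stem, and |H_A| is bounded by the values of |f| at the two points
  u +- v e_i. Cauchy's inequality on a circle of radius R thus bounds |pd0^l f x| by
  N l! ||f|| exp (sigma V (|x| + R)) / R^l.

  The condition p'(r) r ln r -> 0 gives, by the mean value theorem, (p (q t) - p t) ln t -> 0,
  hence V (q t) / V t -> q^rho. Consequently V (r + R) <= k (V r + V R) + c with k = 2^rho + 1,
  which splits exp (sigma V (|x| + R)) into the new weight exp (k sigma V |x|) times
  exp (k sigma V R). Choosing V R = l / (rho k sigma) and comparing R with phi l, again through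
  the ratio limit, bounds exp (k sigma V R) / R^l by a constant times (2 k sigma)^(l/rho) / G_l.
*)

theory Submission
  imports Defs "HOL-Complex_Analysis.Complex_Analysis"
begin

lemma bounded_bilinear_cl_mult:
  "bounded_bilinear ((\<odot>) :: ('n::{finite,linorder}) clif \<Rightarrow> 'n clif \<Rightarrow> 'n clif)"
proof -
  have nth: "(x \<odot> y) $ C = (\<Sum>A\<in>UNIV. \<Sum>B\<in>UNIV.
      x $ A * y $ B * (if (A - B) \<union> (B - A) = C then cl_sign A B else 0))" for x y :: "'n clif" and C
    unfolding cl_mult_def by (auto intro!: sum.cong)
  have "bilinear ((\<odot>) :: 'n clif \<Rightarrow> 'n clif \<Rightarrow> 'n clif)"
    unfolding bilinear_def
    by (auto intro!: linearI simp: vec_eq_iff nth ring_distribs sum.distrib sum_distrib_left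
        mult.assoc mult.left_commute)
  then show ?thesis
    by (rule bilinear_conv_bounded_bilinear[THEN iffD1])
qed

lemma cl_one_nth: "(cl_one :: ('n::{finite,linorder}) clif) $ A = (if A = {} then 1 else 0)"
  by (simp add: cl_one_def axis_def)

lemma cl_mult_axis_nth:
  fixes y :: "('n::{finite,linorder}) clif"
  shows "(axis {i} 1 \<odot> y) $ C = cl_sign {i} (({i} - C) \<union> (C - {i})) * y $ (({i} - C) \<union> (C - {i}))"
proof -
  have "(axis {i} 1 \<odot> y) $ C =
      (\<Sum>B\<in>UNIV. if ({i} - B) \<union> (B - {i}) = C then cl_sign {i} B * y $ B else 0)"
  proof -
    have "(\<Sum>B\<in>UNIV. if (A - B) \<union> (B - A) = C then cl_sign A B * (axis {i} 1 $ A) * (y $ B) else 0)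
      = (if A = {i} then (\<Sum>B\<in>UNIV. if ({i} - B) \<union> (B - {i}) = C then cl_sign {i} B * y $ B else 0) else 0)"
      for A
      by (cases "A = {i}") (simp_all add: axis_def cong del: if_weak_cong)
    then show ?thesis
      by (simp add: cl_mult_def)
  qed
  also have "\<dots> = (\<Sum>B\<in>{({i} - C) \<union> (C - {i})}. cl_sign {i} B * y $ B)"
    by (rule sum.mono_neutral_cong_right) auto
  finally show ?thesis by simp
qed

lemma norm_cl_mult_axis:
  fixes y :: "('n::{finite,linorder}) clif"
  shows "norm (axis {i} 1 \<odot> y) = norm y"
proof -
  define \<tau> where "\<tau> C = ({i} - C) \<union> (C - {i})" for C :: "'n set"
  have "bij \<tau>"
    by (rule o_bij[of \<tau>]) (auto simp: \<tau>_def fun_eq_iff)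
  have sign_sq: "(cl_sign A B)\<^sup>2 = 1" for A B :: "'n set"
    by (simp add: cl_sign_def power_mult_distrib flip: power_mult)
  have "(\<Sum>C\<in>UNIV. ((axis {i} 1 \<odot> y) $ C)\<^sup>2) = (\<Sum>C\<in>UNIV. (y $ \<tau> C)\<^sup>2)"
    by (simp add: cl_mult_axis_nth power_mult_distrib sign_sq \<tau>_def)
  also have "\<dots> = (\<Sum>C\<in>UNIV. (y $ C)\<^sup>2)"
    using sum.reindex_bij_betw[of \<tau> UNIV UNIV "\<lambda>C. (y $ C)\<^sup>2"] \<open>bij \<tau>\<close> by blast
  finally show ?thesis
    by (simp add: norm_vec_def L2_set_def)
qed

lemma axis_in_cl_sphere: "(axis {i} 1 :: ('n::{finite,linorder}) clif) \<in> cl_sphere"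
  by (simp add: cl_sphere_def paravectors_def) (auto simp: axis_def)

lemma uminus_in_cl_sphere: "j \<in> cl_sphere \<Longrightarrow> - j \<in> cl_sphere"
  by (simp add: cl_sphere_def paravectors_def)

lemma slice_point_in_paravectors:
  "j \<in> cl_sphere \<Longrightarrow> u *\<^sub>R cl_one + v *\<^sub>R j \<in> (paravectors :: ('n::{finite,linorder}) clif set)"
  by (auto simp: paravectors_def cl_sphere_def cl_one_nth)

lemma norm_slice_point:
  fixes j :: "('n::{finite,linorder}) clif"
  assumes "j \<in> cl_sphere"
  shows "norm (u *\<^sub>R cl_one + v *\<^sub>R j) = cmod (Complex u v)"
proof -
  have "orthogonal (u *\<^sub>R cl_one) (v *\<^sub>R j)"
    using assms by (simp add: orthogonal_def cl_one_def inner_axis' cl_sphere_def)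
  then have "(norm (u *\<^sub>R cl_one + v *\<^sub>R j))\<^sup>2 = (norm (u *\<^sub>R (cl_one :: 'n clif)))\<^sup>2 + (norm (v *\<^sub>R j))\<^sup>2"
    by (rule norm_add_Pythagorean)
  also have "\<dots> = u\<^sup>2 + v\<^sup>2"
    using assms by (simp add: cl_one_def cl_sphere_def)
  finally show ?thesis
    by (simp add: cmod_def real_sqrt_unique)
qed

lemma paravector_slice_decomp:
  fixes x :: "('n::{finite,linorder}) clif"
  assumes "x \<in> paravectors"
  obtains u v j where "j \<in> cl_sphere" "x = u *\<^sub>R cl_one + v *\<^sub>R j"
proof -
  define w where "w = x - x $ {} *\<^sub>R cl_one"
  have w: "w $ {} = 0" "w \<in> paravectors"
    using assms by (auto simp: w_def cl_one_nth paravectors_def)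
  show ?thesis
  proof (cases "w = 0")
    case True
    with axis_in_cl_sphere show ?thesis
      by (intro that[of "axis {undefined} 1" "x $ {}" 0]) (simp_all add: w_def)
  next
    case False
    then have "w /\<^sub>R norm w \<in> cl_sphere"
      using w by (auto simp: cl_sphere_def paravectors_def)
    then show ?thesis
      using that[of "w /\<^sub>R norm w" "x $ {}" "norm w"] False by (simp add: w_def)
  qed
qed

lemma Cauchy_Riemann_imp_has_field_derivative:
  fixes g0 g1 :: "real \<times> real \<Rightarrow> real"
  assumes d0: "(g0 has_derivative d0) (at (Re z, Im z))"
    and d1: "(g1 has_derivative d1) (at (Re z, Im z))"
    and CR: "d0 (1, 0) = d1 (0, 1)" "d0 (0, 1) = - d1 (1, 0)"
  shows "((\<lambda>w. Complex (g0 (Re w, Im w)) (g1 (Re w, Im w))) has_field_derivative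
           Complex (d0 (1, 0)) (d1 (1, 0))) (at z)"
proof -
  have pair: "d (a, b) = a * d (1, 0) + b * d (0, 1)" if "linear d" for d :: "real \<times> real \<Rightarrow> real" and a b
    using linear_add[OF that, of "(a, 0)" "(0, b)"] linear_scale[OF that, of a "(1, 0)"]
      linear_scale[OF that, of b "(0, 1)"] by simp
  have lin: "linear d0" "linear d1"
    using d0 d1 by (auto dest!: has_derivative_bounded_linear bounded_linear.linear)
  have P: "((\<lambda>w. (Re w, Im w)) has_derivative (\<lambda>h. (Re h, Im h))) (at z)"
    by (auto intro!: derivative_eq_intros)
  have "((\<lambda>w. of_real (g0 (Re w, Im w)) + \<i> * of_real (g1 (Re w, Im w))) has_derivative
        (\<lambda>h. of_real (d0 (Re h, Im h)) + \<i> * of_real (d1 (Re h, Im h)))) (at z)"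
    by (intro has_derivative_add has_derivative_mult_right
        bounded_linear.has_derivative[OF bounded_linear_of_real]
        has_derivative_compose[OF P d0, simplified] has_derivative_compose[OF P d1, simplified])
  moreover have "(\<lambda>h. of_real (d0 (Re h, Im h)) + \<i> * of_real (d1 (Re h, Im h))) =
      (*) (Complex (d0 (1, 0)) (d1 (1, 0)))"
  proof
    fix h :: complex
    show "of_real (d0 (Re h, Im h)) + \<i> * of_real (d1 (Re h, Im h)) = Complex (d0 (1, 0)) (d1 (1, 0)) * h"
      using pair[OF lin(1), of "Re h" "Im h"] pair[OF lin(2), of "Re h" "Im h"]
      by (simp add: complex_eq_iff CR algebra_simps)
  qed
  ultimately show ?thesis
    by (simp add: has_field_derivative_def Complex_eq)
qed

text \<open>The stem \<open>f\<^sub>0 + i f\<^sub>1\<close> is kept blade by blade: \<open>H A\<close> is the coefficient of \<open>e\<^sub>A\<close>,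
  as a function of \<open>u + i v\<close>.\<close>

definition holomorphic_stem ::
    "(('n::{finite,linorder}) clif \<Rightarrow> 'n clif) \<Rightarrow> ('n set \<Rightarrow> complex \<Rightarrow> complex) \<Rightarrow> bool" where
  "holomorphic_stem f H \<longleftrightarrow> (\<forall>A. H A holomorphic_on UNIV) \<and>
     (\<forall>u v. \<forall>j\<in>cl_sphere. f (u *\<^sub>R cl_one + v *\<^sub>R j) =
        (\<chi> A. Re (H A (Complex u v))) + j \<odot> (\<chi> A. Im (H A (Complex u v))))"

lemma slice_monogenic_imp_holomorphic_stem:
  fixes f :: "('n::{finite,linorder}) clif \<Rightarrow> 'n clif"
  assumes "slice_monogenic f"
  obtains H where "holomorphic_stem f H"
proof -
  obtain f0 f1 :: "real \<times> real \<Rightarrow> 'n clif" and D0 D1 :: "real \<times> real \<Rightarrow> (real \<times> real) \<Rightarrow>\<^sub>L 'n clif"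
    where d0: "\<And>z. (f0 has_derivative blinfun_apply (D0 z)) (at z)"
      and d1: "\<And>z. (f1 has_derivative blinfun_apply (D1 z)) (at z)"
      and CR: "\<And>z. D0 z (1, 0) = D1 z (0, 1)" "\<And>z. D0 z (0, 1) = - D1 z (1, 0)"
      and rep: "\<And>u v j. j \<in> cl_sphere \<Longrightarrow> f (u *\<^sub>R cl_one + v *\<^sub>R j) = f0 (u, v) + j \<odot> f1 (u, v)"
    using assms unfolding slice_monogenic_def by metis
  define H where "H A w = Complex (f0 (Re w, Im w) $ A) (f1 (Re w, Im w) $ A)" for A w
  have "(H A has_field_derivative Complex (D0 (Re z, Im z) (1, 0) $ A) (D1 (Re z, Im z) (1, 0) $ A)) (at z)"
    for A z
    unfolding H_def
    using Cauchy_Riemann_imp_has_field_derivative[of "\<lambda>x. f0 x $ A" "\<lambda>h. D0 (Re z, Im z) h $ A" z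
        "\<lambda>x. f1 x $ A" "\<lambda>h. D1 (Re z, Im z) h $ A"]
      bounded_linear.has_derivative[OF bounded_linear_vec_nth d0]
      bounded_linear.has_derivative[OF bounded_linear_vec_nth d1] CR
    by simp
  then have "H A holomorphic_on UNIV" for A
    by (auto simp: holomorphic_on_open)
  moreover have "f0 (u, v) = (\<chi> A. Re (H A (Complex u v)))" "f1 (u, v) = (\<chi> A. Im (H A (Complex u v)))" for u v
    by (simp_all add: H_def vec_eq_iff)
  ultimately show ?thesis
    using rep by (intro that[of H]) (simp add: holomorphic_stem_def)
qed

lemma has_vector_derivative_vec_lambda:
  fixes h :: "'i::finite \<Rightarrow> real \<Rightarrow> real"
  assumes "\<And>i. (h i has_real_derivative d i) (at x within S)"
  shows "((\<lambda>t. \<chi> i. h i t) has_vector_derivative (\<chi> i. d i)) (at x within S)"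
proof -
  have eq: "(\<chi> i. g i) = (\<Sum>i\<in>UNIV. g i *\<^sub>R axis i 1)" for g :: "'i \<Rightarrow> real"
    by (simp add: vec_eq_iff axis_def if_distrib sum.If_cases cong: if_cong)
  have "((\<lambda>t. \<Sum>i\<in>UNIV. h i t *\<^sub>R axis i (1::real)) has_vector_derivative (\<Sum>i\<in>UNIV. d i *\<^sub>R axis i 1))
      (at x within S)"
    using has_vector_derivative_scaleR[OF assms has_vector_derivative_const]
    by (intro has_vector_derivative_sum) simp
  then show ?thesis
    by (simp only: eq)
qed

lemma holomorphic_stem_pd0:
  fixes f :: "('n::{finite,linorder}) clif \<Rightarrow> 'n clif"
  assumes "holomorphic_stem f H"
  shows "holomorphic_stem (pd0 f) (\<lambda>A. deriv (H A))"
  unfolding holomorphic_stem_def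
proof (intro conjI allI ballI)
  have hol: "\<And>A. H A holomorphic_on UNIV"
    and rep: "\<And>u v j. j \<in> cl_sphere \<Longrightarrow> f (u *\<^sub>R cl_one + v *\<^sub>R j) =
        (\<chi> A. Re (H A (Complex u v))) + j \<odot> (\<chi> A. Im (H A (Complex u v)))"
    using assms by (auto simp: holomorphic_stem_def)
  show "deriv (H A) holomorphic_on UNIV" for A
    by (rule holomorphic_deriv[OF hol]) simp
  fix u v :: real and j :: "'n clif" assume j: "j \<in> cl_sphere"
  have shift: "((\<lambda>t. H A (Complex (u + t) v)) has_vector_derivative deriv (H A) (Complex u v)) (at 0)" for A
  proof -
    have "((\<lambda>t. Complex u v + of_real t) has_vector_derivative 1) (at 0)"
      by (auto intro!: derivative_eq_intros)
    from field_vector_diff_chain_at[OF this, of "H A"] show ?thesis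
      using hol by (simp add: o_def Complex_eq holomorphic_derivI[of _ UNIV] algebra_simps)
  qed
  have "((\<lambda>t. f (u *\<^sub>R cl_one + v *\<^sub>R j + t *\<^sub>R cl_one)) has_vector_derivative
      (\<chi> A. Re (deriv (H A) (Complex u v))) + j \<odot> (\<chi> A. Im (deriv (H A) (Complex u v)))) (at 0)"
  proof -
    have "f (u *\<^sub>R cl_one + v *\<^sub>R j + t *\<^sub>R cl_one) = f ((u + t) *\<^sub>R cl_one + v *\<^sub>R j)" for t
      by (simp add: algebra_simps)
    then have f: "(\<lambda>t. f (u *\<^sub>R cl_one + v *\<^sub>R j + t *\<^sub>R cl_one)) =
        (\<lambda>t. (\<chi> A. Re (H A (Complex (u + t) v))) + j \<odot> (\<chi> A. Im (H A (Complex (u + t) v))))"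
      using rep[OF j] by simp
    show ?thesis
      unfolding f
      by (intro has_vector_derivative_add has_vector_derivative_vec_lambda
          bounded_linear.has_vector_derivative[OF bounded_bilinear.bounded_linear_right[OF bounded_bilinear_cl_mult]]
          has_field_derivative_Re has_field_derivative_Im shift)
  qed
  then show "pd0 f (u *\<^sub>R cl_one + v *\<^sub>R j) =
      (\<chi> A. Re (deriv (H A) (Complex u v))) + j \<odot> (\<chi> A. Im (deriv (H A) (Complex u v)))"
    unfolding pd0_def by (rule vector_derivative_at)
qed

lemma holomorphic_stem_higher_pd0:
  assumes "holomorphic_stem f H"
  shows "holomorphic_stem ((pd0 ^^ l) f) (\<lambda>A. (deriv ^^ l) (H A))"
  by (induction l) (simp_all add: assms holomorphic_stem_pd0)

lemma holomorphic_stem_norm_le: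
  fixes f :: "('n::{finite,linorder}) clif \<Rightarrow> 'n clif"
  assumes "holomorphic_stem f H"
  shows "cmod (H A (Complex u v)) \<le>
    norm (f (u *\<^sub>R cl_one + v *\<^sub>R axis {i} 1)) + norm (f (u *\<^sub>R cl_one + v *\<^sub>R - axis {i} 1))"
proof -
  define e :: "'n clif" where "e = axis {i} 1"
  define F0 :: "'n clif" where "F0 = (\<chi> A. Re (H A (Complex u v)))"
  define F1 :: "'n clif" where "F1 = (\<chi> A. Im (H A (Complex u v)))"
  define a b where "a = f (u *\<^sub>R cl_one + v *\<^sub>R e)" and "b = f (u *\<^sub>R cl_one + v *\<^sub>R - e)"
  have e: "e \<in> cl_sphere" "- e \<in> cl_sphere"
    by (simp_all add: e_def axis_in_cl_sphere uminus_in_cl_sphere)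
  have rep: "f (u *\<^sub>R cl_one + v *\<^sub>R j) = F0 + j \<odot> F1" if "j \<in> cl_sphere" for j
    using assms that by (simp add: holomorphic_stem_def F0_def F1_def)
  \<comment> \<open>The stem components are recovered from the values at the conjugate points \<open>u \<pm> v e\<close>.\<close>
  have "2 *\<^sub>R F0 = a + b" "2 *\<^sub>R (e \<odot> F1) = a - b"
    using rep[OF e(1)] rep[OF e(2)] bounded_bilinear.minus_left[OF bounded_bilinear_cl_mult, of e F1]
    by (simp_all add: a_def b_def scaleR_2)
  then have "2 * norm F0 \<le> norm a + norm b" "2 * norm F1 \<le> norm a + norm b"
    using norm_triangle_ineq[of a b] norm_triangle_ineq4[of a b] norm_cl_mult_axis[of i F1]
    by (metis norm_scaleR abs_numeral e_def)+
  moreover have "cmod (H A (Complex u v)) \<le> norm F0 + norm F1"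
    using cmod_le[of "H A (Complex u v)"] component_le_norm_cart[of F0 A] component_le_norm_cart[of F1 A]
    by (simp add: F0_def F1_def)
  ultimately show ?thesis
    by (simp add: a_def b_def e_def)
qed

locale prox_order =
  fixes p :: "real \<Rightarrow> real" and \<rho> :: real
  assumes proximate_order: "proximate_order p \<rho>"
begin

abbreviation growth :: "real \<Rightarrow> real" where
  "growth r \<equiv> r powr p r"

lemma order_pos: "\<rho> > 0"
  using proximate_order by (simp add: proximate_order_def)

lemma tendsto_order: "(p \<longlongrightarrow> \<rho>) at_top"
  using proximate_order by (simp add: proximate_order_def)

lemma tendsto_deriv_times_ln: "((\<lambda>r. deriv p r * r * ln r) \<longlongrightarrow> 0) at_top"
  using proximate_order by (simp add: proximate_order_def)

lemma differentiable_at_pos: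
  assumes "r > 0"
  shows "p differentiable (at r)"
proof -
  have "p differentiable (at r within {0..})"
    using proximate_order assms by (simp add: proximate_order_def)
  moreover have "at r within {0..} = at r"
    by (rule at_within_interior) (use assms in simp)
  ultimately show ?thesis
    by simp
qed

lemma continuous_on_pos: "continuous_on {0<..} p"
  by (intro continuous_at_imp_continuous_on ballI differentiable_imp_continuous_within
      differentiable_at_pos) simp

lemma mean_value_scaled:
  assumes "t > 0" "q > 0"
  obtains z where "min t (q * t) \<le> z" "z \<le> max t (q * t)" "p (q * t) - p t = (q - 1) * t * deriv p z"
proof -
  have D: "DERIV p x :> deriv p x" if "x \<ge> min t (q * t)" for x
  proof -
    have "x > 0"
      using that assms by (smt (verit) mult_pos_pos)
    then show ?thesis
      using differentiable_at_pos by (simp add: DERIV_deriv_iff_real_differentiable)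
  qed
  consider "q < 1" | "q = 1" | "q > 1" by linarith
  then show ?thesis
  proof cases
    case 1
    with assms have "q * t < t" "min t (q * t) = q * t" "max t (q * t) = t"
      by simp_all
    with D obtain z where "q * t < z" "z < t" "p t - p (q * t) = (t - q * t) * deriv p z"
      using MVT2[of "q * t" t p "deriv p"] by auto
    with \<open>min t (q * t) = q * t\<close> \<open>max t (q * t) = t\<close> show ?thesis
      by (intro that[of z]) (auto simp: algebra_simps)
  next
    case 2
    then show ?thesis by (intro that[of t]) auto
  next
    case 3
    with assms have "t < q * t" "min t (q * t) = t" "max t (q * t) = q * t"
      by simp_all
    with D obtain z where "t < z" "z < q * t" "p (q * t) - p t = (q * t - t) * deriv p z"
      using MVT2[of t "q * t" p "deriv p"] by auto
    with \<open>min t (q * t) = t\<close> \<open>max t (q * t) = q * t\<close> show ?thesis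
      by (intro that[of z]) (auto simp: algebra_simps)
  qed
qed

lemma diff_times_ln_le:
  assumes "q > 0" "m = min 1 q" "m * t \<ge> 2" "t * m\<^sup>2 \<ge> 1"
    and small: "\<And>r. r \<ge> m * t \<Longrightarrow> \<bar>deriv p r * r * ln r\<bar> \<le> \<delta>"
  shows "\<bar>(p (q * t) - p t) * ln t\<bar> \<le> 2 * \<bar>q - 1\<bar> / m * \<delta>"
proof -
  have m: "0 < m" "m \<le> 1" "m \<le> q"
    using assms(1,2) by auto
  then have "t > 0"
    using zero_less_mult_pos[of m t] assms(3) by linarith
  then have "t \<ge> 1"
    using assms(3) m(2) mult_right_mono[of m 1 t] by linarith
  obtain z where z: "min t (q * t) \<le> z" "p (q * t) - p t = (q - 1) * t * deriv p z"
    using mean_value_scaled[OF \<open>t > 0\<close> assms(1)] by blast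
  have "m * t \<le> z"
    using z(1) \<open>t > 0\<close> m by (auto simp: assms(2) min_def)
  \<comment> \<open>Both \<open>z\<close> and \<open>t\<close> are comparable to \<open>m t\<close>: \<open>z ln z \<ge> m t ln (m t)\<close> and \<open>ln t \<le> 2 ln (m t)\<close>.\<close>
  have "m * t * ln (m * t) \<le> z * ln z"
    using \<open>m * t \<le> z\<close> assms(3) by (intro mult_mono) auto
  then have deriv_bound: "\<bar>deriv p z\<bar> * (m * t * ln (m * t)) \<le> \<delta>"
    using small[OF \<open>m * t \<le> z\<close>] \<open>m * t \<le> z\<close> assms(3)
      mult_left_mono[of "m * t * ln (m * t)" "z * ln z" "\<bar>deriv p z\<bar>"]
    by (simp add: abs_mult)
  have "ln t \<le> 2 * ln (m * t)"
    using assms(4) m \<open>t > 0\<close> ln_mono[of 1 "t * m\<^sup>2"] by (simp add: ln_mult ln_realpow)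
  then have "\<bar>(p (q * t) - p t) * ln t\<bar> \<le> \<bar>q - 1\<bar> * t * \<bar>deriv p z\<bar> * (2 * ln (m * t))"
    using \<open>t \<ge> 1\<close> by (simp add: z(2) abs_mult mult_left_mono)
  also have "\<dots> = 2 * \<bar>q - 1\<bar> / m * (\<bar>deriv p z\<bar> * (m * t * ln (m * t)))"
    using m by (simp add: field_simps)
  also have "\<dots> \<le> 2 * \<bar>q - 1\<bar> / m * \<delta>"
    using deriv_bound m by (intro mult_left_mono) auto
  finally show ?thesis .
qed

lemma tendsto_diff_times_ln:
  assumes "q > 0"
  shows "((\<lambda>t. (p (q * t) - p t) * ln t) \<longlongrightarrow> 0) at_top"
proof (rule tendstoI)
  fix \<epsilon> :: real assume "\<epsilon> > 0"
  define m d where "m = min 1 q" and "d = \<bar>q - 1\<bar>"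
  have "m > 0" "d \<ge> 0"
    using assms by (simp_all add: m_def d_def)
  define \<delta> where "\<delta> = \<epsilon> * m / (2 * (d + 1))"
  have "\<delta> > 0"
    using \<open>\<epsilon> > 0\<close> \<open>m > 0\<close> \<open>d \<ge> 0\<close> by (simp add: \<delta>_def)
  then obtain T where T: "\<And>r. r \<ge> T \<Longrightarrow> \<bar>deriv p r * r * ln r\<bar> < \<delta>"
    using tendstoD[OF tendsto_deriv_times_ln] by (auto simp: eventually_at_top_linorder)
  show "eventually (\<lambda>t. dist ((p (q * t) - p t) * ln t) 0 < \<epsilon>) at_top"
    using eventually_ge_at_top[of "max (T / m) (max (1 / m\<^sup>2) (2 / m))"]
  proof eventually_elim
    case (elim t)
    then have "m * t \<ge> T" "m * t \<ge> 2" "t * m\<^sup>2 \<ge> 1"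
      using \<open>m > 0\<close> by (auto simp: field_simps)
    then have "\<bar>(p (q * t) - p t) * ln t\<bar> \<le> 2 * d / m * \<delta>"
      unfolding d_def using T by (intro diff_times_ln_le assms m_def) (auto intro: less_imp_le)
    also have "\<dots> = \<epsilon> * (d / (d + 1))"
      using \<open>m > 0\<close> \<open>d \<ge> 0\<close> by (simp add: \<delta>_def field_simps)
    also have "\<dots> < \<epsilon>"
      using \<open>\<epsilon> > 0\<close> \<open>d \<ge> 0\<close> by (simp add: divide_less_eq)
    finally show ?case
      by (simp add: dist_real_def)
  qed
qed

lemma tendsto_growth_ratio:
  assumes "q > 0"
  shows "((\<lambda>t. growth (q * t) / growth t) \<longlongrightarrow> q powr \<rho>) at_top"
proof -
  have scaled: "((\<lambda>t. p (q * t)) \<longlongrightarrow> \<rho>) at_top"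
    by (rule filterlim_compose[OF tendsto_order])
      (rule filterlim_tendsto_pos_mult_at_top[OF tendsto_const assms filterlim_ident])
  have lim: "((\<lambda>t. exp (p (q * t) * ln q + (p (q * t) - p t) * ln t)) \<longlongrightarrow> exp (\<rho> * ln q + 0)) at_top"
    by (intro tendsto_intros scaled tendsto_diff_times_ln assms)
  have "eventually (\<lambda>t. exp (p (q * t) * ln q + (p (q * t) - p t) * ln t) =
      growth (q * t) / growth t) at_top"
    using eventually_gt_at_top[of 0]
  proof eventually_elim
    case (elim t)
    then show ?case
      using assms by (simp add: powr_def ln_mult exp_diff[symmetric] algebra_simps)
  qed
  moreover have "exp (\<rho> * ln q + 0) = q powr \<rho>"
    using assms by (simp add: powr_def)
  ultimately show ?thesis
    using Lim_transform_eventually[OF lim] by simp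
qed

lemma growth_scaled_le:
  assumes "q > 0" "q powr \<rho> < c"
  obtains T where "\<And>t. t \<ge> T \<Longrightarrow> growth (q * t) \<le> c * growth t"
proof -
  have "eventually (\<lambda>t. growth (q * t) / growth t < c \<and> t > 0) at_top"
    using assms by (intro eventually_conj order_tendstoD(2)[OF tendsto_growth_ratio] eventually_gt_at_top)
  then obtain T where T: "\<And>t. t \<ge> T \<Longrightarrow> growth (q * t) / growth t < c \<and> t > 0"
    by (auto simp: eventually_at_top_linorder)
  show ?thesis
  proof (rule that)
    fix t assume "t \<ge> T"
    then have "growth (q * t) / growth t < c" "t > 0"
      using T by auto
    then show "growth (q * t) \<le> c * growth t"
      by (simp add: pos_divide_less_eq)
  qed
qed

lemma growth_scaled_ge:
  assumes "q > 0" "c < q powr \<rho>"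
  obtains T where "\<And>t. t \<ge> T \<Longrightarrow> c * growth t \<le> growth (q * t)"
proof -
  have "eventually (\<lambda>t. growth (q * t) / growth t > c \<and> t > 0) at_top"
    using assms by (intro eventually_conj order_tendstoD(1)[OF tendsto_growth_ratio] eventually_gt_at_top)
  then obtain T where T: "\<And>t. t \<ge> T \<Longrightarrow> growth (q * t) / growth t > c \<and> t > 0"
    by (auto simp: eventually_at_top_linorder)
  show ?thesis
  proof (rule that)
    fix t assume "t \<ge> T"
    then have "growth (q * t) / growth t > c" "t > 0"
      using T by auto
    then show "c * growth t \<le> growth (q * t)"
      by (simp add: pos_less_divide_eq)
  qed
qed

end

locale normalized_prox_order =
  fixes p :: "real \<Rightarrow> real" and \<rho> :: real
  assumes normalized_proximate_order: "normalized_proximate_order p \<rho>"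

sublocale normalized_prox_order \<subseteq> prox_order
  using normalized_proximate_order unfolding normalized_proximate_order_def by unfold_locales blast

context normalized_prox_order
begin

lemma strict_mono_growth: "strict_mono_on {0<..} growth"
  using normalized_proximate_order unfolding normalized_proximate_order_def by blast

lemma tendsto_growth_at_0: "(growth \<longlongrightarrow> 0) (at_right 0)"
  using normalized_proximate_order unfolding normalized_proximate_order_def by blast

lemma growth_mono:
  assumes "0 \<le> r" "r \<le> s"
  shows "growth r \<le> growth s"
proof (cases "r = 0")
  case False
  then show ?thesis
    using strict_mono_on_leD[OF strict_mono_growth, of r s] assms by simp
qed simp

lemma continuous_on_growth: "continuous_on {0<..} growth"
  by (intro continuous_intros continuous_on_pos) auto

lemma growth_unbounded: "\<exists>b>0. growth b > s"
proof -
  have "eventually (\<lambda>t. p t > \<rho> / 2) at_top"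
    using order_tendstoD(1)[OF tendsto_order, of "\<rho> / 2"] order_pos by simp
  then obtain T where T: "\<And>t. t \<ge> T \<Longrightarrow> p t > \<rho> / 2"
    by (auto simp: eventually_at_top_linorder)
  define t where "t = max (max T 1) ((\<bar>s\<bar> + 1) powr (2 / \<rho>))"
  have t: "t \<ge> 1" "t \<ge> T"
    by (auto simp: t_def)
  have "\<bar>s\<bar> + 1 = ((\<bar>s\<bar> + 1) powr (2 / \<rho>)) powr (\<rho> / 2)"
    using order_pos by (simp add: powr_powr)
  also have "\<dots> \<le> t powr (\<rho> / 2)"
    using order_pos by (intro powr_mono2) (auto simp: t_def)
  also have "\<dots> \<le> growth t"
    using t T[of t] by (intro powr_mono) auto
  finally show ?thesis
    using t by (intro exI[of _ t]) auto
qed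

lemma po_inv_spec:
  assumes "s > 0"
  shows po_inv_pos: "po_inv p s > 0" and growth_po_inv: "growth (po_inv p s) = s"
proof -
  have "eventually (\<lambda>t. growth t < s) (at_right 0)"
    using order_tendstoD(2)[OF tendsto_growth_at_0 assms] .
  then obtain c where "c > 0" "\<And>t. 0 < t \<Longrightarrow> t < c \<Longrightarrow> growth t < s"
    unfolding eventually_at_right_field by auto
  then obtain a where a: "a > 0" "growth a < s"
    using field_lbound_gt_zero[of c c] by fastforce
  obtain b where b: "b > 0" "growth b > s"
    using growth_unbounded by blast
  have "a \<le> b"
    using growth_mono[of b a] a b by linarith
  moreover have "continuous_on {a..b} growth"
    using continuous_on_growth by (rule continuous_on_subset) (use a in auto)
  ultimately obtain r where r: "a \<le> r" "growth r = s"
    using IVT'[of growth a s b] a b by auto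
  have "r > 0 \<and> growth r = s"
    using r a by simp
  moreover have "r' = r" if "r' > 0 \<and> growth r' = s" for r'
    using strict_mono_on_eq[OF strict_mono_growth, of r' r] that r a by simp
  ultimately have "po_inv p s = r"
    unfolding po_inv_def by (rule the_equality)
  then show "po_inv p s > 0" "growth (po_inv p s) = s"
    using r a by auto
qed

lemma po_inv_le:
  assumes "s > 0" "r > 0" "s \<le> growth r"
  shows "po_inv p s \<le> r"
proof (rule ccontr)
  assume "\<not> po_inv p s \<le> r"
  then have "growth r < growth (po_inv p s)"
    using strict_mono_onD[OF strict_mono_growth, of r "po_inv p s"] po_inv_pos assms by simp
  with assms show False
    by (simp add: growth_po_inv)
qed

lemma G_po_pos: "G_po p \<rho> l > 0"
  using po_inv_pos[of "real l"] order_pos by (simp add: G_po_def)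

lemma growth_add_le:
  obtains c where "\<And>r R. r \<ge> 0 \<Longrightarrow> R \<ge> 0 \<Longrightarrow> growth (r + R) \<le> (2 powr \<rho> + 1) * (growth r + growth R) + c"
proof -
  define k where "k = 2 powr \<rho> + 1"
  obtain T where T: "\<And>t. t \<ge> T \<Longrightarrow> growth (2 * t) \<le> k * growth t"
    using growth_scaled_le[of 2 k] by (auto simp: k_def)
  define c where "c = growth (2 * max T 0)"
  have "c \<ge> 0"
    by (simp add: c_def)
  have double: "growth (2 * t) \<le> k * growth t + c" if "t \<ge> 0" for t
  proof (cases "t \<ge> T")
    case True
    then show ?thesis
      using T[of t] \<open>c \<ge> 0\<close> by linarith
  next
    case False
    then have "growth (2 * t) \<le> c"
      unfolding c_def using that by (intro growth_mono) auto
    moreover have "k * growth t \<ge> 0"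
      by (simp add: k_def)
    ultimately show ?thesis
      by linarith
  qed
  show ?thesis
  proof (rule that[of c])
    fix r R :: real assume "r \<ge> 0" "R \<ge> 0"
    note that = this
    have "growth (r + R) \<le> growth (2 * max r R)"
      using that by (intro growth_mono) auto
    also have "\<dots> \<le> k * growth (max r R) + c"
      using that by (intro double) auto
    also have "\<dots> \<le> k * (growth r + growth R) + c"
      using powr_ge_zero[of r "p r"] powr_ge_zero[of R "p R"]
      by (intro add_right_mono mult_left_mono) (auto simp: k_def max_def)
    finally show "growth (r + R) \<le> (2 powr \<rho> + 1) * (growth r + growth R) + c"
      by (simp only: k_def)
  qed
qed

lemma po_inv_le_scaled:
  assumes "a > 0"
  shows "eventually (\<lambda>l. po_inv p (real l) \<le> (2 * a) powr (1 / \<rho>) * po_inv p (real l / a)) sequentially"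
proof -
  define q where "q = (2 * a) powr (1 / \<rho>)"
  have "q > 0" "q powr \<rho> = 2 * a"
    using assms order_pos by (simp_all add: q_def powr_powr)
  then obtain T where T: "\<And>t. t \<ge> T \<Longrightarrow> a * growth t \<le> growth (q * t)"
    using growth_scaled_ge[of q a] assms by auto
  have "eventually (\<lambda>l. real l > a * growth T \<and> l > 0) sequentially"
    by (intro eventually_conj eventually_gt_at_top
        eventually_compose_filterlim[OF eventually_gt_at_top filterlim_real_sequentially])
  then show ?thesis
  proof (rule eventually_mono, safe)
    fix l :: nat assume l: "real l > a * growth T" "l > 0"
    define R where "R = po_inv p (real l / a)"
    have R: "R > 0" "growth R = real l / a"
      using l assms by (simp_all add: R_def po_inv_pos growth_po_inv)
    have "a * growth T < a * growth R"
      using l(1) R(2) assms by simp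
    then have "T \<le> R"
      using growth_mono[of R T] R(1) assms by force
    then have "real l \<le> growth (q * R)"
      using T[of R] R assms by simp
    then have "po_inv p (real l) \<le> q * R"
      using l R \<open>q > 0\<close> by (intro po_inv_le) auto
    then show "po_inv p (real l) \<le> (2 * a) powr (1 / \<rho>) * po_inv p (real l / a)"
      by (simp add: q_def R_def)
  qed
qed

end

lemma eventually_le_imp_le_mult:
  fixes f g :: "nat \<Rightarrow> real"
  assumes "eventually (\<lambda>n. f n \<le> g n) sequentially" "\<And>n. g n > 0"
  obtains C where "C \<ge> 1" "\<And>n. f n \<le> C * g n"
proof -
  obtain N where N: "\<And>n. n \<ge> N \<Longrightarrow> f n \<le> g n"
    using assms(1) by (auto simp: eventually_sequentially)
  define C where "C = max 1 (Max ((\<lambda>n. f n / g n) ` {..<N}))"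
  have "C \<ge> 1"
    by (simp add: C_def)
  have "f n \<le> C * g n" for n
  proof (cases "n < N")
    case True
    then have "f n / g n \<le> C"
      unfolding C_def by (intro max.coboundedI2 Max_ge) auto
    then show ?thesis
      using assms(2)[of n] by (simp add: divide_le_eq)
  next
    case False
    have "g n \<le> C * g n"
      using \<open>C \<ge> 1\<close> assms(2)[of n] by (simp add: mult_le_cancel_right1)
    then show ?thesis
      using N[of n] False by linarith
  qed
  with \<open>C \<ge> 1\<close> show ?thesis
    by (rule that)
qed

context normalized_prox_order
begin

lemma exp_div_po_inv_power_le:
  assumes "s > 0"
  shows "eventually (\<lambda>l. exp (real l / \<rho>) / po_inv p (real l / (\<rho> * s)) ^ l
    \<le> (2 * s) powr (real l / \<rho>) / G_po p \<rho> l) sequentially"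
proof -
  define b where "b = \<rho> * s"
  have "b > 0"
    using assms order_pos by (simp add: b_def)
  define q where "q = (2 * b) powr (1 / \<rho>)"
  have exp_q: "exp (real l / \<rho>) * q ^ l = (2 * s) powr (real l / \<rho>) * (exp 1 * \<rho>) powr (real l / \<rho>)"
    for l :: nat
  proof -
    have "q ^ l = (2 * b) powr (real l / \<rho>)"
      using \<open>b > 0\<close> by (simp add: q_def powr_realpow[symmetric] powr_powr)
    moreover have "exp (real l / \<rho>) = exp 1 powr (real l / \<rho>)"
      by (simp add: powr_def)
    ultimately show ?thesis
      using assms order_pos by (simp add: b_def powr_mult[symmetric] mult_ac)
  qed
  show ?thesis
    using po_inv_le_scaled[OF \<open>b > 0\<close>] eventually_gt_at_top[of 0]
  proof eventually_elim
    case (elim l)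
    define R where "R = po_inv p (real l / b)"
    have pos: "R > 0" "po_inv p (real l) > 0"
      using elim \<open>b > 0\<close> by (simp_all add: R_def po_inv_pos)
    have "po_inv p (real l) ^ l \<le> (q * R) ^ l"
      using elim pos by (intro power_mono) (simp_all add: q_def R_def)
    then have "exp (real l / \<rho>) / R ^ l \<le> exp (real l / \<rho>) * q ^ l / po_inv p (real l) ^ l"
      using pos by (simp add: field_simps power_mult_distrib)
    also have "\<dots> = (2 * s) powr (real l / \<rho>) / G_po p \<rho> l"
      using elim by (simp add: exp_q G_po_def)
    finally show ?case
      by (simp add: R_def b_def)
  qed
qed

lemma weight_shift_estimate:
  assumes "\<sigma> > 0"
  obtains C R where "C \<ge> 0" "\<And>l. R l > 0"
    "\<And>l r. r \<ge> 0 \<Longrightarrow> exp (\<sigma> * growth (r + R l)) / R l ^ l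
       \<le> C * (2 * (2 powr \<rho> + 1) * \<sigma>) powr (real l / \<rho>) / G_po p \<rho> l * exp ((2 powr \<rho> + 1) * \<sigma> * growth r)"
proof -
  define k where "k = 2 powr \<rho> + 1"
  define s where "s = k * \<sigma>"
  have "s > 0"
    using assms by (simp add: s_def k_def add_pos_nonneg)
  obtain c where c: "\<And>r R. r \<ge> 0 \<Longrightarrow> R \<ge> 0 \<Longrightarrow> growth (r + R) \<le> k * (growth r + growth R) + c"
    using growth_add_le unfolding k_def by blast
  \<comment> \<open>\<open>R l\<close> is the radius where \<open>exp (s * growth r) / r ^ l\<close> is essentially minimal; \<open>R 0\<close> is arbitrary.\<close>
  define R where "R l = (if l = 0 then 1 else po_inv p (real l / (\<rho> * s)))" for l
  have R: "R l > 0" for l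
    using \<open>s > 0\<close> order_pos by (simp add: R_def po_inv_pos)
  have "eventually (\<lambda>l. exp (s * growth (R l)) / R l ^ l \<le> (2 * s) powr (real l / \<rho>) / G_po p \<rho> l)
      sequentially"
    using exp_div_po_inv_power_le[OF \<open>s > 0\<close>] eventually_gt_at_top[of 0]
    by eventually_elim (use \<open>s > 0\<close> order_pos in \<open>simp add: R_def growth_po_inv\<close>)
  moreover have "(2 * s) powr (real l / \<rho>) / G_po p \<rho> l > 0" for l
    using \<open>s > 0\<close> G_po_pos by simp
  ultimately obtain C1 where C1: "C1 \<ge> 1"
    "\<And>l. exp (s * growth (R l)) / R l ^ l \<le> C1 * ((2 * s) powr (real l / \<rho>) / G_po p \<rho> l)"
    by (rule eventually_le_imp_le_mult) auto
  show ?thesis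
  proof (rule that[of "exp (\<sigma> * c) * C1" R])
    fix l and r :: real assume "r \<ge> 0"
    have "exp (\<sigma> * growth (r + R l)) \<le> exp (\<sigma> * (k * (growth r + growth (R l)) + c))"
      using c[OF \<open>r \<ge> 0\<close>, of "R l"] R[of l] assms by simp
    also have "\<dots> = exp (\<sigma> * c) * exp (s * growth (R l)) * exp (k * \<sigma> * growth r)"
      by (simp add: s_def algebra_simps flip: exp_add)
    finally have "exp (\<sigma> * growth (r + R l)) / R l ^ l
        \<le> exp (\<sigma> * c) * (exp (s * growth (R l)) / R l ^ l) * exp (k * \<sigma> * growth r)"
      using R[of l] by (simp add: divide_right_mono)
    also have "\<dots> \<le> exp (\<sigma> * c) * (C1 * ((2 * s) powr (real l / \<rho>) / G_po p \<rho> l)) * exp (k * \<sigma> * growth r)"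
      using C1(2)[of l] by (intro mult_left_mono mult_right_mono) auto
    finally show "exp (\<sigma> * growth (r + R l)) / R l ^ l
       \<le> exp (\<sigma> * c) * C1 * (2 * (2 powr \<rho> + 1) * \<sigma>) powr (real l / \<rho>) / G_po p \<rho> l
         * exp ((2 powr \<rho> + 1) * \<sigma> * growth r)"
      by (simp add: s_def k_def mult_ac)
  qed (use C1 R in auto)
qed

end

lemma po_norm_le_iff:
  "po_norm p \<sigma> f \<le> ereal M \<longleftrightarrow>
    (\<forall>x\<in>paravectors. norm (f x) \<le> M * exp (\<sigma> * norm x powr p (norm x)))"
proof -
  have "norm (f x) * exp (- \<sigma> * norm x powr p (norm x)) \<le> M \<longleftrightarrow>
      norm (f x) \<le> M * exp (\<sigma> * norm x powr p (norm x))" for x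
    by (simp add: exp_minus divide_inverse[symmetric] pos_divide_le_eq)
  then show ?thesis
    by (simp add: po_norm_def SUP_le_iff)
qed

lemma po_norm_nonneg: "po_norm p \<sigma> (f :: ('n::{finite,linorder}) clif \<Rightarrow> 'n clif) \<ge> 0"
proof -
  have "(0 :: ('n::{finite,linorder}) clif) \<in> paravectors"
    by (simp add: paravectors_def)
  then have "ereal (norm (f 0) * exp (- \<sigma> * norm (0 :: 'n clif) powr p (norm (0 :: 'n clif)))) \<le> po_norm p \<sigma> f"
    unfolding po_norm_def by (rule SUP_upper)
  then show ?thesis
    by (rule order_trans[rotated]) simp
qed

lemma norm_stem_value_le:
  fixes j :: "('n::{finite,linorder}) clif"
  assumes K: "K \<ge> 0" "\<And>a b :: 'n clif. norm (a \<odot> b) \<le> norm a * norm b * K" and "norm j = 1"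
  shows "norm ((\<chi> A. Re (h A)) + j \<odot> (\<chi> A. Im (h A))) \<le> (1 + K) * (\<Sum>A\<in>UNIV. cmod (h A))"
proof -
  have "norm (\<chi> A. Re (h A)) \<le> (\<Sum>A\<in>UNIV. cmod (h A))" "norm (\<chi> A. Im (h A)) \<le> (\<Sum>A\<in>UNIV. cmod (h A))"
    using norm_le_l1_cart[of "\<chi> A. Re (h A)"] norm_le_l1_cart[of "\<chi> A. Im (h A)"]
      sum_mono[of UNIV "\<lambda>A. \<bar>Re (h A)\<bar>" "\<lambda>A. cmod (h A)"] sum_mono[of UNIV "\<lambda>A. \<bar>Im (h A)\<bar>" "\<lambda>A. cmod (h A)"]
    by (auto simp: abs_Re_le_cmod abs_Im_le_cmod)
  then show ?thesis
    using norm_triangle_ineq[of "\<chi> A. Re (h A)" "j \<odot> (\<chi> A. Im (h A))"] K(2)[of j "\<chi> A. Im (h A)"]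
      mult_left_mono[OF _ K(1)] \<open>norm j = 1\<close> by (fastforce simp: algebra_simps)
qed

lemma holomorphic_stem_Cauchy_inequality:
  fixes f :: "('n::{finite,linorder}) clif \<Rightarrow> 'n clif"
  assumes H: "holomorphic_stem f H" and "R > 0"
    and B: "\<And>y. y \<in> paravectors \<Longrightarrow> norm y \<le> cmod (Complex u v) + R \<Longrightarrow> norm (f y) \<le> B"
  shows "cmod ((deriv ^^ l) (H A) (Complex u v)) \<le> fact l * (2 * B) / R ^ l"
proof (rule Cauchy_inequality)
  have hol: "H A holomorphic_on UNIV"
    using H by (simp add: holomorphic_stem_def)
  then show "H A holomorphic_on ball (Complex u v) R" "continuous_on (cball (Complex u v) R) (H A)"
    by (auto intro: holomorphic_on_subset holomorphic_on_imp_continuous_on continuous_on_subset)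
  show "R > 0" by fact
  fix w assume "cmod (Complex u v - w) = R"
  then have "cmod w \<le> cmod (Complex u v) + R"
    using norm_triangle_ineq4[of "Complex u v" "Complex u v - w"] by simp
  then have "norm (f (Re w *\<^sub>R cl_one + Im w *\<^sub>R e)) \<le> B" if "e \<in> cl_sphere" for e :: "'n clif"
    using B[OF slice_point_in_paravectors[OF that]] norm_slice_point[OF that] by simp
  moreover have "cmod (H A w) \<le> norm (f (Re w *\<^sub>R cl_one + Im w *\<^sub>R axis {undefined} 1))
      + norm (f (Re w *\<^sub>R cl_one + Im w *\<^sub>R - axis {undefined} 1))"
    using holomorphic_stem_norm_le[OF H, of A "Re w" "Im w" undefined] by simp
  ultimately show "cmod (H A w) \<le> 2 * B"
    using axis_in_cl_sphere uminus_in_cl_sphere by (smt (verit))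
qed

lemma slice_monogenic_Cauchy_estimate:
  obtains N :: real where "N \<ge> 0"
    "\<And>(f :: ('n::{finite,linorder}) clif \<Rightarrow> 'n clif) x R B l. slice_monogenic f \<Longrightarrow> x \<in> paravectors \<Longrightarrow>
       R > 0 \<Longrightarrow> (\<And>y. y \<in> paravectors \<Longrightarrow> norm y \<le> norm x + R \<Longrightarrow> norm (f y) \<le> B) \<Longrightarrow>
       norm ((pd0 ^^ l) f x) \<le> N * fact l * B / R ^ l"
proof -
  obtain K where K: "K > 0" "\<And>a b :: 'n clif. norm (a \<odot> b) \<le> norm a * norm b * K"
    using bounded_bilinear.pos_bounded[OF bounded_bilinear_cl_mult] by blast
  define N where "N = 2 * (1 + K) * card (UNIV :: 'n set set)"
  show ?thesis
  proof (rule that[of N])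
    show "N \<ge> 0"
      using K by (simp add: N_def)
    fix f :: "'n clif \<Rightarrow> 'n clif" and x :: "'n clif" and R B :: real and l
    assume f: "slice_monogenic f" and x: "x \<in> paravectors" and "R > 0"
      and B: "\<And>y. y \<in> paravectors \<Longrightarrow> norm y \<le> norm x + R \<Longrightarrow> norm (f y) \<le> B"
    obtain H where H: "holomorphic_stem f H"
      using slice_monogenic_imp_holomorphic_stem[OF f] .
    obtain u v j where j: "j \<in> cl_sphere" and x_eq: "x = u *\<^sub>R cl_one + v *\<^sub>R j"
      using paravector_slice_decomp[OF x] .
    have "(pd0 ^^ l) f x =
        (\<chi> A. Re ((deriv ^^ l) (H A) (Complex u v))) + j \<odot> (\<chi> A. Im ((deriv ^^ l) (H A) (Complex u v)))"
      using holomorphic_stem_higher_pd0[OF H, of l] j by (simp add: holomorphic_stem_def x_eq)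
    also have "norm \<dots> \<le> (1 + K) * (\<Sum>A\<in>UNIV. cmod ((deriv ^^ l) (H A) (Complex u v)))"
      using K j by (intro norm_stem_value_le) (simp_all add: cl_sphere_def)
    also have "\<dots> \<le> (1 + K) * (card (UNIV :: 'n set set) * (fact l * (2 * B) / R ^ l))"
      using holomorphic_stem_Cauchy_inequality[OF H \<open>R > 0\<close>] B norm_slice_point[OF j] K
      by (intro mult_left_mono sum_bounded_above) (simp_all add: x_eq)
    also have "\<dots> = N * fact l * B / R ^ l"
      using \<open>R > 0\<close> by (simp add: N_def field_simps)
    finally show "norm ((pd0 ^^ l) f x) \<le> N * fact l * B / R ^ l" .
  qed
qed

context normalized_prox_order
begin

lemma norm_higher_pd0_le:
  assumes "\<sigma> > 0"
  shows "\<exists>C. \<forall>(f :: ('n::{finite,linorder}) clif \<Rightarrow> 'n clif) M l x.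
    slice_monogenic f \<longrightarrow> M \<ge> 0 \<longrightarrow> (\<forall>y\<in>paravectors. norm (f y) \<le> M * exp (\<sigma> * growth (norm y))) \<longrightarrow>
    x \<in> paravectors \<longrightarrow>
    norm ((pd0 ^^ l) f x) \<le> fact l * C * (2 * (2 powr \<rho> + 1) * \<sigma>) powr (real l / \<rho>) / G_po p \<rho> l * M
      * exp ((2 powr \<rho> + 1) * \<sigma> * growth (norm x))"
proof -
  define k where "k = 2 powr \<rho> + 1"
  obtain N where N: "N \<ge> 0" "\<And>(f :: 'n clif \<Rightarrow> 'n clif) x R B l. slice_monogenic f \<Longrightarrow> x \<in> paravectors \<Longrightarrow>
       R > 0 \<Longrightarrow> (\<And>y. y \<in> paravectors \<Longrightarrow> norm y \<le> norm x + R \<Longrightarrow> norm (f y) \<le> B) \<Longrightarrow>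
       norm ((pd0 ^^ l) f x) \<le> N * fact l * B / R ^ l"
    using slice_monogenic_Cauchy_estimate by blast
  obtain C0 R where C0: "C0 \<ge> 0" and R: "\<And>l. R l > 0"
    and weight: "\<And>l r. r \<ge> 0 \<Longrightarrow> exp (\<sigma> * growth (r + R l)) / R l ^ l
       \<le> C0 * (2 * k * \<sigma>) powr (real l / \<rho>) / G_po p \<rho> l * exp (k * \<sigma> * growth r)"
    using weight_shift_estimate[OF assms] unfolding k_def by blast
  have "norm ((pd0 ^^ l) f x) \<le> fact l * (N * C0) * (2 * k * \<sigma>) powr (real l / \<rho>) / G_po p \<rho> l * M
      * exp (k * \<sigma> * growth (norm x))"
    if f: "slice_monogenic f" and "M \<ge> 0" and bound_f: "\<forall>y\<in>paravectors. norm (f y) \<le> M * exp (\<sigma> * growth (norm y))"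
      and x: "x \<in> paravectors" for f :: "'n clif \<Rightarrow> 'n clif" and M l x
  proof -
    have "norm ((pd0 ^^ l) f x) \<le> N * fact l * (M * exp (\<sigma> * growth (norm x + R l))) / R l ^ l"
      using bound_f growth_mono \<open>M \<ge> 0\<close> \<open>\<sigma> > 0\<close>
      by (intro N(2)[OF f x R]) (fastforce intro!: order_trans[OF bspec[OF bound_f]] mult_left_mono)
    also have "\<dots> = N * fact l * M * (exp (\<sigma> * growth (norm x + R l)) / R l ^ l)"
      by simp
    also have "\<dots> \<le> N * fact l * M
        * (C0 * (2 * k * \<sigma>) powr (real l / \<rho>) / G_po p \<rho> l * exp (k * \<sigma> * growth (norm x)))"
      using weight[of "norm x" l] N(1) \<open>M \<ge> 0\<close> by (intro mult_left_mono) auto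
    finally show ?thesis
      by (simp add: mult_ac)
  qed
  then show ?thesis
    unfolding k_def by blast
qed

lemma po_norm_higher_pd0_le:
  assumes "\<sigma> > 0"
  shows "\<exists>C. \<forall>f :: ('n::{finite,linorder}) clif \<Rightarrow> 'n clif \<in> A_space p \<sigma>. \<forall>l.
    ereal (1 / fact l) * po_norm p ((2 powr \<rho> + 1) * \<sigma>) ((pd0 ^^ l) f)
      \<le> ereal (C * (2 * (2 powr \<rho> + 1) * \<sigma>) powr (real l / \<rho>) / G_po p \<rho> l) * po_norm p \<sigma> f"
proof -
  obtain C where C: "\<And>(f :: 'n clif \<Rightarrow> 'n clif) M l x. slice_monogenic f \<Longrightarrow> M \<ge> 0 \<Longrightarrow>
      \<forall>y\<in>paravectors. norm (f y) \<le> M * exp (\<sigma> * growth (norm y)) \<Longrightarrow> x \<in> paravectors \<Longrightarrow>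
      norm ((pd0 ^^ l) f x) \<le> fact l * C * (2 * (2 powr \<rho> + 1) * \<sigma>) powr (real l / \<rho>) / G_po p \<rho> l * M
        * exp ((2 powr \<rho> + 1) * \<sigma> * growth (norm x))"
    using norm_higher_pd0_le[OF assms] by blast
  have "ereal (1 / fact l) * po_norm p ((2 powr \<rho> + 1) * \<sigma>) ((pd0 ^^ l) f)
      \<le> ereal (C * (2 * (2 powr \<rho> + 1) * \<sigma>) powr (real l / \<rho>) / G_po p \<rho> l) * po_norm p \<sigma> f"
    if fA: "f \<in> A_space p \<sigma>" for f :: "'n clif \<Rightarrow> 'n clif" and l
  proof -
    obtain M where f: "slice_monogenic f" and M: "po_norm p \<sigma> f = ereal M"
      using fA po_norm_nonneg[of p \<sigma> f] by (cases "po_norm p \<sigma> f") (auto simp: A_space_def)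
    then have "M \<ge> 0"
      using po_norm_nonneg[of p \<sigma> f] by simp
    have "\<forall>y\<in>paravectors. norm (f y) \<le> M * exp (\<sigma> * growth (norm y))"
      using M po_norm_le_iff[of p \<sigma> f M] by simp
    then have "po_norm p ((2 powr \<rho> + 1) * \<sigma>) ((pd0 ^^ l) f)
        \<le> ereal (fact l * C * (2 * (2 powr \<rho> + 1) * \<sigma>) powr (real l / \<rho>) / G_po p \<rho> l * M)"
      unfolding po_norm_le_iff using C[OF f \<open>M \<ge> 0\<close>] by (simp add: mult.assoc)
    from ereal_mult_left_mono[OF this, of "ereal (1 / fact l)"] show ?thesis
      by (simp add: M mult_ac)
  qed
  then show ?thesis
    by blast
qed

end

theorem lemma3p11:
  fixes \<rho> :: real
  assumes "\<rho> > 0"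
  shows "\<exists>k > 0. \<forall>\<rho>'. normalized_proximate_order \<rho>' \<rho> \<longrightarrow>
     (\<forall>\<sigma> > 0. \<exists>C. \<forall>(f :: ('n::{finite,linorder}) clif \<Rightarrow> 'n clif) \<in> A_space \<rho>' \<sigma>. \<forall>l :: nat.
        ereal (1 / fact l) * po_norm \<rho>' (k * \<sigma>) ((pd0 ^^ l) f)
          \<le> ereal (C * (2 * k * \<sigma>) powr (real l / \<rho>) / G_po \<rho>' \<rho> l) * po_norm \<rho>' \<sigma> f)"
  by (intro exI[of _ "2 powr \<rho> + 1"] conjI allI impI add_pos_nonneg
      normalized_prox_order.po_norm_higher_pd0_le normalized_prox_order.intro) simp_all

end
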